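(* Let $\mathcal{A}$ be a $C^*$-algebra, $\overline{\mathcal{A}}$ its regular monotone completion, and $(\mathcal{V}(\overline{\mathcal{A}}),j)$ the Dedekind completion of the function system $\overline{\mathcal{A}}^{sa}$, with $\mathcal{A}^{sa}\subseteq\overline{\mathcal{A}}^{sa}$ regarded as a subspace of $\mathcal{V}(\overline{\mathcal{A}})$ via $j$. Then $\mathcal{A}^{sa}$ is a regular subspace of $\mathcal{V}(\overline{\mathcal{A}})$, and the embedding $\mathcal{A}^{sa}\hookrightarrow\mathcal{V}(\overline{\mathcal{A}})$ is sup-preserving.
   Context: All $C^*$-algebras are unital; $\mathcal{A}^{sa}$ is the self-adjoint part with order $a\le b\iff b-a\ge0$, which is a function system (Archimedean partially ordered real vector space with order unit $1$). A regular monotone completion of $\mathcal{A}$ is a monotone complete $C^*$-algebra $\overline{\mathcal{A}}$ containing $\mathcal{A}$ as a unital $C^*$-subalgebra such that $\overline{\mathcal{A}}^{sa}$ is the monotone closure of $\mathcal{A}^{sa}$ in $\overline{\mathcal{A}}^{sa}$, every $b\in\overline{\mathcal{A}}^{sa}$ is the supremum in $\overline{\mathcal{A}}^{sa}$ of $\{a\in\mathcal{A}^{sa}:a\le b\}$, and suprema existing in $\mathcal{A}^{sa}$ remain suprema in $\overline{\mathcal{A}}^{sa}$ (exists and unique up to $^*$-isomorphism, Hamana). A subspace $\mathcal{V}$ of a function system $\mathcal{W}$ is regular if every $w\in\mathcal{W}$ equals $\sup_{\mathcal{W}}\{v\in\mathcal{V}:v\le w\}$. An extension of a function system $\mathcal{V}$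 is a pair $(\mathcal{W},j)$ with $j:\mathcal{V}\to\mathcal{W}$ a unital linear order injection (order isomorphism onto its image with $j(1)=1$); it is regular if $j(\mathcal{V})$ is a regular subspace. A Dedekind completion of $\mathcal{V}$ is a regular extension $(\mathcal{W},j)$ with $\mathcal{W}$ a boundedly complete vector lattice (every subset bounded above has a supremum and every subset bounded below has an infimum); it exists and is unique up to linear order isomorphism (Wright). An order injection $j:\mathcal{V}\to\mathcal{W}$ is sup-preserving if whenever $\sup_{\mathcal{V}}\mathcal{F}=v$ for $\mathcal{F}\subseteq\mathcal{V}$, then $\sup_{\mathcal{W}}j(\mathcal{F})=j(v)$. *)

theory Defs
  imports Complex_Main
begin

text \<open>A unital C*-algebra is modelled on a type of class real_normed_algebra_1 and banach
  (a complete normed real algebra with unit of norm 1), together with a complex scalar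
  multiplication sc extending the real one, and an involution st.\<close>

definition cstar_alg ::
  "(complex \<Rightarrow> 'a::{real_normed_algebra_1,banach} \<Rightarrow> 'a) \<Rightarrow> ('a \<Rightarrow> 'a) \<Rightarrow> bool" where
  "cstar_alg sc st \<longleftrightarrow>
     (\<forall>r x. sc (complex_of_real r) x = r *\<^sub>R x) \<and>
     (\<forall>a b x. sc (a + b) x = sc a x + sc b x) \<and>
     (\<forall>a x y. sc a (x + y) = sc a x + sc a y) \<and>
     (\<forall>a b x. sc a (sc b x) = sc (a * b) x) \<and>
     (\<forall>a x y. sc a (x * y) = sc a x * y \<and> sc a (x * y) = x * sc a y) \<and>
     (\<forall>a x. norm (sc a x) = cmod a * norm x) \<and>
     (\<forall>x. st (st x) = x) \<and>
     (\<forall>x y. st (x + y) = st x + st y) \<and>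
     (\<forall>a x. st (sc a x) = sc (cnj a) (st x)) \<and>
     (\<forall>x y. st (x * y) = st y * st x) \<and>
     (\<forall>x. norm (st x * x) = (norm x)\<^sup>2)"

text \<open>Unital C*-subalgebra (of the C*-algebra whose carrier is the whole type).\<close>
definition cstar_subalg ::
  "(complex \<Rightarrow> 'a::{real_normed_algebra_1,banach} \<Rightarrow> 'a) \<Rightarrow> ('a \<Rightarrow> 'a) \<Rightarrow> 'a set \<Rightarrow> bool" where
  "cstar_subalg sc st A \<longleftrightarrow>
     1 \<in> A \<and> (\<forall>x\<in>A. \<forall>y\<in>A. x + y \<in> A \<and> x * y \<in> A) \<and>
     (\<forall>a. \<forall>x\<in>A. sc a x \<in> A) \<and> (\<forall>x\<in>A. st x \<in> A) \<and> closed A"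

definition spec_in ::
  "'a::real_normed_algebra_1 set \<Rightarrow> (complex \<Rightarrow> 'a \<Rightarrow> 'a) \<Rightarrow> 'a \<Rightarrow> complex set" where
  "spec_in S sc x = {c. \<not> (\<exists>y\<in>S. y * (x - sc c 1) = 1 \<and> (x - sc c 1) * y = 1)}"

definition sa_part :: "'a set \<Rightarrow> ('a \<Rightarrow> 'a) \<Rightarrow> 'a set" where
  "sa_part S st = {x\<in>S. st x = x}"

definition pos_in ::
  "'a::real_normed_algebra_1 set \<Rightarrow> (complex \<Rightarrow> 'a \<Rightarrow> 'a) \<Rightarrow> ('a \<Rightarrow> 'a) \<Rightarrow> 'a \<Rightarrow> bool" where
  "pos_in S sc st x \<longleftrightarrow> x \<in> sa_part S st \<and>
     (\<forall>c\<in>spec_in S sc x. Im c = 0 \<and> 0 \<le> Re c)"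

definition le_in ::
  "'a::real_normed_algebra_1 set \<Rightarrow> (complex \<Rightarrow> 'a \<Rightarrow> 'a) \<Rightarrow> ('a \<Rightarrow> 'a) \<Rightarrow> 'a \<Rightarrow> 'a \<Rightarrow> bool" where
  "le_in S sc st a b \<longleftrightarrow> pos_in S sc st (b - a)"

definition is_sup_on :: "('b \<Rightarrow> 'b \<Rightarrow> bool) \<Rightarrow> 'b set \<Rightarrow> 'b set \<Rightarrow> 'b \<Rightarrow> bool" where
  "is_sup_on le X F s \<longleftrightarrow> s \<in> X \<and> (\<forall>f\<in>F. le f s) \<and>
     (\<forall>u\<in>X. (\<forall>f\<in>F. le f u) \<longrightarrow> le s u)"

definition is_inf_on :: "('b \<Rightarrow> 'b \<Rightarrow> bool) \<Rightarrow> 'b set \<Rightarrow> 'b set \<Rightarrow> 'b \<Rightarrow> bool" where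
  "is_inf_on le X F s \<longleftrightarrow> s \<in> X \<and> (\<forall>f\<in>F. le s f) \<and>
     (\<forall>u\<in>X. (\<forall>f\<in>F. le u f) \<longrightarrow> le u s)"

definition up_directed :: "('b \<Rightarrow> 'b \<Rightarrow> bool) \<Rightarrow> 'b set \<Rightarrow> bool" where
  "up_directed le D \<longleftrightarrow> (\<forall>x\<in>D. \<forall>y\<in>D. \<exists>z\<in>D. le x z \<and> le y z)"

definition bdd_above_on :: "('b \<Rightarrow> 'b \<Rightarrow> bool) \<Rightarrow> 'b set \<Rightarrow> 'b set \<Rightarrow> bool" where
  "bdd_above_on le X F \<longleftrightarrow> (\<exists>u\<in>X. \<forall>f\<in>F. le f u)"

definition bdd_below_on :: "('b \<Rightarrow> 'b \<Rightarrow> bool) \<Rightarrow> 'b set \<Rightarrow> 'b set \<Rightarrow> bool" where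
  "bdd_below_on le X F \<longleftrightarrow> (\<exists>u\<in>X. \<forall>f\<in>F. le u f)"

definition monotone_complete ::
  "(complex \<Rightarrow> 'a::{real_normed_algebra_1,banach} \<Rightarrow> 'a) \<Rightarrow> ('a \<Rightarrow> 'a) \<Rightarrow> bool" where
  "monotone_complete sc st \<longleftrightarrow> cstar_alg sc st \<and>
     (\<forall>D. D \<subseteq> sa_part UNIV st \<and> D \<noteq> {} \<and> up_directed (le_in UNIV sc st) D \<and>
          bdd_above_on (le_in UNIV sc st) (sa_part UNIV st) D \<longrightarrow>
          (\<exists>s. is_sup_on (le_in UNIV sc st) (sa_part UNIV st) D s))"

definition monotone_closed ::
  "(complex \<Rightarrow> 'a::{real_normed_algebra_1,banach} \<Rightarrow> 'a) \<Rightarrow> ('a \<Rightarrow> 'a) \<Rightarrow> 'a set \<Rightarrow> bool" where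
  "monotone_closed sc st Y \<longleftrightarrow> Y \<subseteq> sa_part UNIV st \<and>
     (\<forall>D s. D \<subseteq> Y \<and> D \<noteq> {} \<and> up_directed (le_in UNIV sc st) D \<and>
          is_sup_on (le_in UNIV sc st) (sa_part UNIV st) D s \<longrightarrow> s \<in> Y)"

definition monotone_closure ::
  "(complex \<Rightarrow> 'a::{real_normed_algebra_1,banach} \<Rightarrow> 'a) \<Rightarrow> ('a \<Rightarrow> 'a) \<Rightarrow> 'a set \<Rightarrow> 'a set" where
  "monotone_closure sc st X = \<Inter> {Y. X \<subseteq> Y \<and> monotone_closed sc st Y}"

definition regular_monotone_completion ::
  "(complex \<Rightarrow> 'a::{real_normed_algebra_1,banach} \<Rightarrow> 'a) \<Rightarrow> ('a \<Rightarrow> 'a) \<Rightarrow> 'a set \<Rightarrow> bool" where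
  "regular_monotone_completion sc st A \<longleftrightarrow>
     monotone_complete sc st \<and> cstar_subalg sc st A \<and>
     sa_part UNIV st = monotone_closure sc st (sa_part A st) \<and>
     (\<forall>b\<in>sa_part UNIV st. is_sup_on (le_in UNIV sc st) (sa_part UNIV st)
         {a\<in>sa_part A st. le_in UNIV sc st a b} b) \<and>
     (\<forall>F s. F \<subseteq> sa_part A st \<and> is_sup_on (le_in A sc st) (sa_part A st) F s \<longrightarrow>
         is_sup_on (le_in UNIV sc st) (sa_part UNIV st) F s)"

text \<open>The ordered real vector space 'w with distinguished element e is a function system:
  e is an order unit and the order is Archimedean.\<close>
definition function_system :: "'w::ordered_real_vector \<Rightarrow> bool" where
  "function_system e \<longleftrightarrow>
     (\<forall>w. \<exists>r::real. - (r *\<^sub>R e) \<le> w \<and> w \<le> r *\<^sub>R e) \<and>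
     (\<forall>w. (\<forall>r::real. r > 0 \<longrightarrow> w \<le> r *\<^sub>R e) \<longrightarrow> w \<le> 0)"

definition bdd_complete_vector_lattice :: "'w::ordered_real_vector itself \<Rightarrow> bool" where
  "bdd_complete_vector_lattice _ \<longleftrightarrow>
     (\<forall>x y::'w. (\<exists>s. is_sup_on (\<le>) UNIV {x, y} s) \<and> (\<exists>s. is_inf_on (\<le>) UNIV {x, y} s)) \<and>
     (\<forall>F::'w set. F \<noteq> {} \<and> bdd_above_on (\<le>) UNIV F \<longrightarrow> (\<exists>s. is_sup_on (\<le>) UNIV F s)) \<and>
     (\<forall>F::'w set. F \<noteq> {} \<and> bdd_below_on (\<le>) UNIV F \<longrightarrow> (\<exists>s. is_inf_on (\<le>) UNIV F s))"

definition dedekind_completion_sa ::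
  "(complex \<Rightarrow> 'a::{real_normed_algebra_1,banach} \<Rightarrow> 'a) \<Rightarrow> ('a \<Rightarrow> 'a) \<Rightarrow>
   'w::ordered_real_vector \<Rightarrow> ('a \<Rightarrow> 'w) \<Rightarrow> bool" where
  "dedekind_completion_sa sc st e j \<longleftrightarrow>
     function_system e \<and>
     (\<forall>x\<in>sa_part UNIV st. \<forall>y\<in>sa_part UNIV st. j (x + y) = j x + j y) \<and>
     (\<forall>r. \<forall>x\<in>sa_part UNIV st. j (r *\<^sub>R x) = r *\<^sub>R j x) \<and>
     j 1 = e \<and>
     (\<forall>x\<in>sa_part UNIV st. \<forall>y\<in>sa_part UNIV st. le_in UNIV sc st x y \<longleftrightarrow> j x \<le> j y) \<and>
     (\<forall>w. is_sup_on (\<le>) UNIV {j v | v. v \<in> sa_part UNIV st \<and> j v \<le> w} w) \<and>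
     bdd_complete_vector_lattice TYPE('w)"

end

theory Submission
  imports Defs
begin

(* The image j(Abar^sa) is sup-dense in the Dedekind completion V, and as j is linear and
   Abar^sa is closed under negation it is also inf-dense. An order embedding onto an inf-dense
   subset preserves every supremum that exists in the domain: an upper bound u of j(F) is the
   infimum of the j x above it, and each such x bounds F. Hence sups in A^sa, which remain sups
   in Abar^sa, are preserved by j; applied to b = sup of the elements of A^sa below b
   (regularity of the monotone completion) this transports regularity of A^sa to V. *)

lemma is_inf_on_if_is_sup_on_uminus:
  fixes F :: "'w::ordered_ab_group_add set"
  assumes sup: "is_sup_on (\<le>) UNIV (uminus ` F) (- w)"
  shows "is_inf_on (\<le>) UNIV F w"
  unfolding is_inf_on_def
proof (intro conjI ballI impI UNIV_I)
  show "w \<le> f" if "f \<in> F" for f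
    using sup that unfolding is_sup_on_def by auto
  show "u \<le> w" if lower: "\<forall>f\<in>F. u \<le> f" for u
  proof -
    have "\<forall>g\<in>uminus ` F. g \<le> - u"
      using lower by auto
    then have "- w \<le> - u"
      using sup unfolding is_sup_on_def by blast
    then show ?thesis by simp
  qed
qed

lemma inf_dense_if_sup_dense_uminus_closed:
  fixes j :: "'a::uminus \<Rightarrow> 'w::ordered_ab_group_add"
  assumes symm: "\<And>x. x \<in> X \<Longrightarrow> - x \<in> X \<and> j (- x) = - j x"
    and sup_dense: "\<And>w. is_sup_on (\<le>) UNIV {j x | x. x \<in> X \<and> j x \<le> w} w"
  shows "is_inf_on (\<le>) UNIV {j x | x. x \<in> X \<and> w \<le> j x} w"
proof -
  have "uminus ` {j x | x. x \<in> X \<and> w \<le> j x} = {j x | x. x \<in> X \<and> j x \<le> - w}"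
  proof (intro equalityI subsetI)
    fix z assume "z \<in> uminus ` {j x | x. x \<in> X \<and> w \<le> j x}"
    then obtain x where x: "x \<in> X" "w \<le> j x" "z = - j x" by blast
    have "- x \<in> X" and j_neg: "j (- x) = - j x"
      using symm[OF x(1)] by auto
    moreover have "j (- x) \<le> - w"
      using x(2) j_neg by simp
    ultimately have "j (- x) \<in> {j x | x. x \<in> X \<and> j x \<le> - w}"
      by blast
    moreover have "z = j (- x)"
      using x(3) j_neg by simp
    ultimately show "z \<in> {j x | x. x \<in> X \<and> j x \<le> - w}"
      by simp
  next
    fix z assume "z \<in> {j x | x. x \<in> X \<and> j x \<le> - w}"
    then obtain x where x: "x \<in> X" "j x \<le> - w" "z = j x" by blast
    have "- x \<in> X" and j_neg: "j (- x) = - j x"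
      using symm[OF x(1)] by auto
    moreover have "w \<le> j (- x)"
      using x(2) j_neg by (simp add: le_minus_iff)
    ultimately have "j (- x) \<in> {j x | x. x \<in> X \<and> w \<le> j x}"
      by blast
    moreover have "z = - j (- x)"
      using x(3) j_neg by simp
    ultimately show "z \<in> uminus ` {j x | x. x \<in> X \<and> w \<le> j x}"
      by (rule rev_image_eqI)
  qed
  then show ?thesis
    using sup_dense[of "- w"] by (simp add: is_inf_on_if_is_sup_on_uminus)
qed

lemma is_sup_on_image_if_inf_dense:
  fixes j :: "'a \<Rightarrow> 'w::order"
  assumes embed: "\<And>x y. x \<in> X \<Longrightarrow> y \<in> X \<Longrightarrow> le x y \<longleftrightarrow> j x \<le> j y"
    and inf_dense: "\<And>w. is_inf_on (\<le>) UNIV {j x | x. x \<in> X \<and> w \<le> j x} w"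
    and "F \<subseteq> X" and sup: "is_sup_on le X F v"
  shows "is_sup_on (\<le>) UNIV (j ` F) (j v)"
  unfolding is_sup_on_def
proof (intro conjI ballI impI UNIV_I)
  have v: "v \<in> X" and ub: "\<And>f. f \<in> F \<Longrightarrow> le f v"
    and lub: "\<And>u. u \<in> X \<Longrightarrow> \<forall>f\<in>F. le f u \<Longrightarrow> le v u"
    using sup unfolding is_sup_on_def by blast+
  show "g \<le> j v" if "g \<in> j ` F" for g
    using that ub embed v \<open>F \<subseteq> X\<close> by blast
  show "j v \<le> u" if upper: "\<forall>g\<in>j ` F. g \<le> u" for u
  proof -
    have "j v \<le> j x" if "x \<in> X" "u \<le> j x" for x
    proof -
      have "le f x" if "f \<in> F" for f
        using embed[of f x] upper order_trans \<open>F \<subseteq> X\<close> \<open>f \<in> F\<close> \<open>x \<in> X\<close> \<open>u \<le> j x\<close> by blast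
      then show ?thesis using lub embed v \<open>x \<in> X\<close> by blast
    qed
    then show ?thesis using inf_dense[of u] unfolding is_inf_on_def by blast
  qed
qed

lemma sup_dense_image_subset_if_regular:
  fixes j :: "'a \<Rightarrow> 'w::order"
  assumes embed: "\<And>x y. x \<in> X \<Longrightarrow> y \<in> X \<Longrightarrow> le x y \<longleftrightarrow> j x \<le> j y"
    and "Y \<subseteq> X"
    and regular: "\<And>x. x \<in> X \<Longrightarrow> is_sup_on (\<le>) UNIV (j ` {y \<in> Y. le y x}) (j x)"
    and sup_dense: "\<And>w. is_sup_on (\<le>) UNIV {j x | x. x \<in> X \<and> j x \<le> w} w"
  shows "is_sup_on (\<le>) UNIV {j y | y. y \<in> Y \<and> j y \<le> w} w"
  unfolding is_sup_on_def
proof (intro conjI ballI impI UNIV_I)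
  show "g \<le> w" if "g \<in> {j y | y. y \<in> Y \<and> j y \<le> w}" for g
    using that by blast
  show "w \<le> u" if upper: "\<forall>g\<in>{j y | y. y \<in> Y \<and> j y \<le> w}. g \<le> u" for u
  proof -
    have "j x \<le> u" if "x \<in> X" "j x \<le> w" for x
    proof -
      have "j y \<le> u" if "y \<in> Y" "le y x" for y
        using embed[of y x] upper order_trans \<open>Y \<subseteq> X\<close> that \<open>x \<in> X\<close> \<open>j x \<le> w\<close> by blast
      then show ?thesis using regular[OF \<open>x \<in> X\<close>] unfolding is_sup_on_def by blast
    qed
    then show ?thesis using sup_dense[of w] unfolding is_sup_on_def by blast
  qed
qed

lemma uminus_mem_sa_part:
  assumes "cstar_alg sc st" and "x \<in> sa_part UNIV st"
  shows "- x \<in> sa_part UNIV st"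
proof -
  have sc_real: "\<And>r x. sc (complex_of_real r) x = r *\<^sub>R x"
    and st_sc: "\<And>a x. st (sc a x) = sc (cnj a) (st x)"
    using assms(1) unfolding cstar_alg_def by simp_all
  have "st (- x) = st (sc (complex_of_real (- 1)) x)"
    using sc_real[of "- 1" x] by simp
  also have "\<dots> = sc (complex_of_real (- 1)) (st x)"
    by (simp add: st_sc)
  also have "\<dots> = - x"
    using assms(2) sc_real[of "- 1" x] by (simp add: sa_part_def)
  finally show ?thesis
    using assms(2) by (simp add: sa_part_def)
qed

lemma dedekind_completion_sa_inf_dense:
  assumes "cstar_alg sc st" and "dedekind_completion_sa sc st e j"
  shows "is_inf_on (\<le>) UNIV {j x | x. x \<in> sa_part UNIV st \<and> w \<le> j x} w"
proof (rule inf_dense_if_sup_dense_uminus_closed)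
  have j_scaleR: "\<And>r x. x \<in> sa_part UNIV st \<Longrightarrow> j (r *\<^sub>R x) = r *\<^sub>R j x"
    using assms(2) unfolding dedekind_completion_sa_def by blast
  show "- x \<in> sa_part UNIV st \<and> j (- x) = - j x" if "x \<in> sa_part UNIV st" for x
    using uminus_mem_sa_part[OF assms(1) that] j_scaleR[OF that, of "- 1"] by simp
  show "is_sup_on (\<le>) UNIV {j x | x. x \<in> sa_part UNIV st \<and> j x \<le> w} w" for w
    using assms(2) unfolding dedekind_completion_sa_def by blast
qed

lemma dedekind_completion_sa_preserves_sup:
  assumes "cstar_alg sc st" and "dedekind_completion_sa sc st e j"
    and "F \<subseteq> sa_part UNIV st" and "is_sup_on (le_in UNIV sc st) (sa_part UNIV st) F v"
  shows "is_sup_on (\<le>) UNIV (j ` F) (j v)"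
proof (rule is_sup_on_image_if_inf_dense[OF _ _ assms(3,4)])
  show "le_in UNIV sc st x y \<longleftrightarrow> j x \<le> j y"
    if "x \<in> sa_part UNIV st" "y \<in> sa_part UNIV st" for x y
    using assms(2) that unfolding dedekind_completion_sa_def by blast
  show "is_inf_on (\<le>) UNIV {j x | x. x \<in> sa_part UNIV st \<and> w \<le> j x} w" for w
    by (rule dedekind_completion_sa_inf_dense[OF assms(1,2)])
qed

lemma dedekind_completion_sa_sup_dense_subset:
  assumes cstar: "cstar_alg sc st" and dc: "dedekind_completion_sa sc st e j"
    and "Y \<subseteq> sa_part UNIV st"
    and regular: "\<And>x. x \<in> sa_part UNIV st \<Longrightarrow>
      is_sup_on (le_in UNIV sc st) (sa_part UNIV st) {y \<in> Y. le_in UNIV sc st y x} x"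
  shows "is_sup_on (\<le>) UNIV {j y | y. y \<in> Y \<and> j y \<le> w} w"
proof (rule sup_dense_image_subset_if_regular[where le = "le_in UNIV sc st"])
  show "le_in UNIV sc st x y \<longleftrightarrow> j x \<le> j y"
    if "x \<in> sa_part UNIV st" "y \<in> sa_part UNIV st" for x y
    using dc that unfolding dedekind_completion_sa_def by blast
  show "is_sup_on (\<le>) UNIV {j x | x. x \<in> sa_part UNIV st \<and> j x \<le> w} w" for w
    using dc unfolding dedekind_completion_sa_def by blast
  show "is_sup_on (\<le>) UNIV (j ` {y \<in> Y. le_in UNIV sc st y x}) (j x)"
    if "x \<in> sa_part UNIV st" for x
    by (rule dedekind_completion_sa_preserves_sup[OF cstar dc _ regular[OF that]])
      (use \<open>Y \<subseteq> sa_part UNIV st\<close> in blast)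
qed (fact \<open>Y \<subseteq> sa_part UNIV st\<close>)

theorem proposition6p4:
  fixes sc :: "complex \<Rightarrow> 'a::{real_normed_algebra_1,banach} \<Rightarrow> 'a"
    and st :: "'a \<Rightarrow> 'a"
    and A :: "'a set"
    and e :: "'w::ordered_real_vector"
    and j :: "'a \<Rightarrow> 'w"
  assumes "regular_monotone_completion sc st A"
    and "dedekind_completion_sa sc st e j"
  shows "(\<forall>w. is_sup_on (\<le>) UNIV {j a | a. a \<in> sa_part A st \<and> j a \<le> w} w) \<and>
         (\<forall>F v. F \<subseteq> sa_part A st \<and> is_sup_on (le_in A sc st) (sa_part A st) F v \<longrightarrow>
                is_sup_on (\<le>) UNIV (j ` F) (j v))"
proof -
  have cstar: "cstar_alg sc st"
    using assms(1) unfolding regular_monotone_completion_def monotone_complete_def by blast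
  have sa_A: "sa_part A st \<subseteq> sa_part UNIV st"
    by (auto simp: sa_part_def)
  have regular_A: "is_sup_on (le_in UNIV sc st) (sa_part UNIV st)
      {a \<in> sa_part A st. le_in UNIV sc st a b} b" if "b \<in> sa_part UNIV st" for b
    using assms(1) that unfolding regular_monotone_completion_def by blast
  have sup_A: "is_sup_on (le_in UNIV sc st) (sa_part UNIV st) F v"
    if "F \<subseteq> sa_part A st" "is_sup_on (le_in A sc st) (sa_part A st) F v" for F v
    using assms(1) that unfolding regular_monotone_completion_def by blast
  have "is_sup_on (\<le>) UNIV {j a | a. a \<in> sa_part A st \<and> j a \<le> w} w" for w
    by (rule dedekind_completion_sa_sup_dense_subset[OF cstar assms(2) sa_A regular_A])
  moreover have "is_sup_on (\<le>) UNIV (j ` F) (j v)"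
    if "F \<subseteq> sa_part A st" "is_sup_on (le_in A sc st) (sa_part A st) F v" for F v
    using that sa_A sup_A by (blast intro: dedekind_completion_sa_preserves_sup[OF cstar assms(2)])
  ultimately show ?thesis by blast
qed

end
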